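(* Let $f,g\colon\mathbb{R}\to\mathbb{R}$ be smooth $T$-periodic functions ($T>0$) with $\frac1T\int_0^Tg(t)\,dt=0$. Then there exists $\lambda_0$ such that for every $\lambda\geqslant\lambda_0$ with $\lambda\in\mathbb{N}$, the equation $$\ddot x=f(t)\sin x-(1+g(\lambda t))\cos x$$ has a $T$-periodic solution $x(t)$ with $x(t)\in(0,\pi)$ for all $t$.
   Context: The equation describes an inverted pendulum with a horizontally moving pivot point in a gravity field oscillating as $1+g(\lambda t)$. *)

theory Defs
  imports "HOL-Analysis.Analysis"
begin

definition smooth_real :: "(real \<Rightarrow> real) \<Rightarrow> bool" where
  "smooth_real f \<longleftrightarrow> (\<forall>n. ((deriv ^^ n) f) differentiable_on UNIV)"

definition periodic_real :: "real \<Rightarrow> (real \<Rightarrow> real) \<Rightarrow> bool" where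
  "periodic_real T f \<longleftrightarrow> (\<forall>t. f (t + T) = f t)"

end

theory Submission
  imports Defs
begin

text \<open>Let G be a T-periodic second antiderivative of g, which exists because g has mean zero.
  For large n the function alpha(t) = delta/2 - G(n t)/n^2 stays in a small interval (0, delta],
  and alpha'' = -g(n t) exactly cancels the oscillating part of gravity. Since near x = 0 gravity
  dominates the bounded horizontal forcing f, alpha is a lower solution and pi - alpha an upper
  solution of the equation. Between a well-ordered pair of periodic lower and upper solutions a
  periodic solution is obtained by monotone iteration of x \<mapsto> v, where v is the periodic solution
  of v'' - M v = F(t, x) - M x; for M a one-sided Lipschitz constant of F this map is monotone,
  and its periodic Green operator is explicit.\<close>

lemma periodic_real_nat:
  assumes "periodic_real T f"
  shows "f (t + real n * T) = f t"
proof (induction n)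
  case (Suc n)
  have "f (t + real (Suc n) * T) = f ((t + real n * T) + T)"
    by (simp add: algebra_simps)
  also have "\<dots> = f t"
    using assms Suc.IH unfolding periodic_real_def by simp
  finally show ?case .
qed simp

lemma periodic_real_int:
  assumes "periodic_real T f"
  shows "f (t + real_of_int m * T) = f t"
proof (cases "m \<ge> 0")
  case True
  then show ?thesis
    using periodic_real_nat[OF assms, of t "nat m"] by simp
next
  case False
  then show ?thesis
    using periodic_real_nat[OF assms, of "t + real_of_int m * T" "nat (- m)"] by simp
qed

lemma periodic_real_scale_nat:
  assumes "periodic_real T f"
  shows "periodic_real T (\<lambda>t. f (real n * t))"
  using periodic_real_nat[OF assms] by (simp add: periodic_real_def distrib_left mult.assoc)

lemma periodic_real_bounded:
  fixes \<phi> :: "real \<Rightarrow> real"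
  assumes "T > 0" "continuous_on UNIV \<phi>" "periodic_real T \<phi>"
  shows "\<exists>B\<ge>0. \<forall>t. \<bar>\<phi> t\<bar> \<le> B"
proof -
  have "compact (\<phi> ` {0..T})"
    using assms(2) by (intro compact_continuous_image) (auto intro: continuous_on_subset)
  then have "bounded (\<phi> ` {0..T})"
    by (rule compact_imp_bounded)
  then obtain B where "\<forall>y \<in> \<phi> ` {0..T}. norm y \<le> B"
    unfolding bounded_iff by blast
  then have B: "\<And>s. s \<in> {0..T} \<Longrightarrow> \<bar>\<phi> s\<bar> \<le> B"
    by simp
  have "\<bar>\<phi> t\<bar> \<le> B" for t
  proof -
    define m where "m = \<lfloor>t / T\<rfloor>"
    define s where "s = t - real_of_int m * T"
    have "real_of_int m \<le> t / T" "t / T < real_of_int m + 1"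
      unfolding m_def by linarith+
    with assms(1) have "s \<in> {0..T}"
      by (auto simp: s_def field_simps)
    moreover have "\<phi> t = \<phi> s"
      using periodic_real_int[OF assms(3), of s m] by (simp add: s_def)
    ultimately show ?thesis using B by simp
  qed
  moreover have "B \<ge> 0"
    using B[of 0] assms(1) by simp
  ultimately show ?thesis by blast
qed

lemma periodic_real_derivative:
  fixes \<phi> \<phi>' :: "real \<Rightarrow> real"
  assumes "\<And>t. (\<phi> has_real_derivative \<phi>' t) (at t)" "periodic_real T \<phi>"
  shows "periodic_real T \<phi>'"
  unfolding periodic_real_def
proof
  fix t
  have "((\<lambda>s. \<phi> (s + T)) has_real_derivative \<phi>' (t + T)) (at t)"
    using DERIV_chain2[OF assms(1) DERIV_add[OF DERIV_ident DERIV_const[of T]]] by simp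
  moreover have "(\<lambda>s. \<phi> (s + T)) = \<phi>"
    using assms(2) by (simp add: periodic_real_def)
  ultimately have "(\<phi> has_real_derivative \<phi>' (t + T)) (at t)"
    by simp
  then show "\<phi>' (t + T) = \<phi>' t"
    by (rule DERIV_unique[OF _ assms(1)])
qed

lemma smooth_real_continuous_on: "smooth_real f \<Longrightarrow> continuous_on UNIV f"
  unfolding smooth_real_def by (metis differentiable_imp_continuous_on funpow_0)

lemma continuous_on_has_real_antiderivative:
  fixes \<phi> :: "real \<Rightarrow> real"
  assumes "continuous_on UNIV \<phi>"
  shows "\<exists>\<Phi>. \<forall>x. (\<Phi> has_real_derivative \<phi> x) (at x)"
proof -
  have "\<exists>\<Phi>. \<forall>x::real. -\<infinity> < ereal x \<longrightarrow> ereal x < \<infinity> \<longrightarrow> (\<Phi> has_vector_derivative \<phi> x) (at x)"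
    by (rule einterval_antiderivative) (use assms in \<open>auto simp: continuous_on_eq_continuous_at\<close>)
  then show ?thesis
    by (auto simp: has_real_derivative_iff_has_vector_derivative)
qed

lemma integral_eq_antiderivative_diff:
  fixes \<phi> \<Phi> :: "real \<Rightarrow> real"
  assumes "\<And>x. (\<Phi> has_real_derivative \<phi> x) (at x)" "a \<le> b"
  shows "integral {a..b} \<phi> = \<Phi> b - \<Phi> a"
  using assms
  by (intro integral_unique fundamental_theorem_of_calculus)
     (auto simp: has_real_derivative_iff_has_vector_derivative intro: has_vector_derivative_at_within)

lemma antiderivative_periodic_increment:
  fixes \<Phi> \<phi> :: "real \<Rightarrow> real"
  assumes "\<And>x. (\<Phi> has_real_derivative \<phi> x) (at x)" "periodic_real T \<phi>"
  shows "\<Phi> (t + T) - \<Phi> t = \<Phi> T - \<Phi> 0"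
proof -
  have "((\<lambda>s. \<Phi> (s + T) - \<Phi> s) has_real_derivative \<phi> (x + T) - \<phi> x) (at x)" for x
    using DERIV_diff[OF DERIV_chain2[OF assms(1) DERIV_add[OF DERIV_ident DERIV_const[of T]]] assms(1)]
    by simp
  then have "((\<lambda>s. \<Phi> (s + T) - \<Phi> s) has_real_derivative 0) (at x)" for x
    using assms(2) by (simp add: periodic_real_def)
  then show ?thesis
    using DERIV_isconst_all[of "\<lambda>s. \<Phi> (s + T) - \<Phi> s" t 0] by simp
qed

text \<open>The mean-zero condition makes the first antiderivative periodic; subtracting a linear
  term then makes the second one periodic as well.\<close>
lemma periodic_second_antiderivative:
  fixes g :: "real \<Rightarrow> real"
  assumes T: "T > 0" and gc: "continuous_on UNIV g" and gp: "periodic_real T g"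
    and gi: "integral {0..T} g = 0"
  obtains G G' where "\<And>t. (G has_real_derivative G' t) (at t)"
    "\<And>t. (G' has_real_derivative g t) (at t)" "periodic_real T G"
proof -
  obtain H where H: "\<And>x. (H has_real_derivative g x) (at x)"
    using continuous_on_has_real_antiderivative[OF gc] by blast
  have "H T - H 0 = 0"
    using integral_eq_antiderivative_diff[OF H, of 0 T] T gi by simp
  then have Hp: "periodic_real T H"
    using antiderivative_periodic_increment[OF H gp] by (simp add: periodic_real_def)
  obtain G0 where G0: "\<And>x. (G0 has_real_derivative H x) (at x)"
    using continuous_on_has_real_antiderivative[OF has_real_derivative_imp_continuous_on[OF H]]
    by blast
  define c where "c = (G0 T - G0 0) / T"
  have "c * (t + T) = c * t + (G0 T - G0 0)" for t
    using T by (simp add: c_def field_simps)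
  then have "G0 (t + T) - c * (t + T) = G0 t - c * t" for t
    using antiderivative_periodic_increment[OF G0 Hp, of t] by simp
  then have "periodic_real T (\<lambda>t. G0 t - c * t)"
    by (simp add: periodic_real_def)
  moreover have "((\<lambda>t. G0 t - c * t) has_real_derivative H t - c) (at t)" for t
    using DERIV_diff[OF G0 DERIV_cmult[OF DERIV_ident, where c = c]] by simp
  moreover have "((\<lambda>t. H t - c) has_real_derivative g t) (at t)" for t
    using DERIV_diff[OF H DERIV_const[of c]] by simp
  ultimately show ?thesis
    by (rule that[rotated 2])
qed

lemma DERIV_exp_cmult: "((\<lambda>t. exp (c * t)) has_real_derivative exp (c * t) * c) (at t)"
  by (auto intro!: derivative_eq_intros)

definition exp_window :: "real \<Rightarrow> real \<Rightarrow> (real \<Rightarrow> real) \<Rightarrow> real \<Rightarrow> real" where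
  "exp_window c T h t = exp (c * t) * integral {t..t + T} (\<lambda>s. exp (- c * s) * h s)"

lemma exp_mult_integrable_on:
  fixes h :: "real \<Rightarrow> real"
  assumes "continuous_on UNIV h"
  shows "(\<lambda>s. exp (c * s) * h s) integrable_on {a..b}"
  by (intro integrable_continuous_interval continuous_intros continuous_on_subset[OF assms]) simp

lemma exp_window_antiderivative:
  fixes h \<Phi> :: "real \<Rightarrow> real"
  assumes "\<And>s. (\<Phi> has_real_derivative exp (- c * s) * h s) (at s)" "T \<ge> 0"
  shows "exp_window c T h t = exp (c * t) * (\<Phi> (t + T) - \<Phi> t)"
  using integral_eq_antiderivative_diff[OF assms(1), of t "t + T"] assms(2)
  by (simp add: exp_window_def)

lemma exp_window_has_derivative:
  fixes h :: "real \<Rightarrow> real"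
  assumes T: "T \<ge> 0" and hc: "continuous_on UNIV h" and hp: "periodic_real T h"
  shows "(exp_window c T h has_real_derivative c * exp_window c T h t + (exp (- c * T) - 1) * h t) (at t)"
proof -
  have "continuous_on UNIV (\<lambda>s. exp (- c * s) * h s)"
    using hc by (intro continuous_intros)
  then obtain \<Phi> where \<Phi>: "\<And>s. (\<Phi> has_real_derivative exp (- c * s) * h s) (at s)"
    using continuous_on_has_real_antiderivative by blast
  have "((\<lambda>t. \<Phi> (t + T) - \<Phi> t) has_real_derivative
      exp (- c * (t + T)) * h (t + T) - exp (- c * t) * h t) (at t)"
    using DERIV_diff[OF DERIV_chain2[OF \<Phi> DERIV_add[OF DERIV_ident DERIV_const[of T]]] \<Phi>] by simp
  also have "exp (- c * (t + T)) * h (t + T) - exp (- c * t) * h t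
      = (exp (- c * T) - 1) * exp (- c * t) * h t"
    unfolding hp[unfolded periodic_real_def, rule_format] by (simp add: algebra_simps flip: exp_add)
  finally have "((\<lambda>t. exp (c * t) * (\<Phi> (t + T) - \<Phi> t)) has_real_derivative
      exp (c * t) * c * (\<Phi> (t + T) - \<Phi> t) + (exp (- c * T) - 1) * exp (- c * t) * h t * exp (c * t))
      (at t)" (is "(_ has_real_derivative ?D) _")
    by (rule DERIV_mult[OF DERIV_exp_cmult])
  moreover have "?D = c * (exp (c * t) * (\<Phi> (t + T) - \<Phi> t)) + (exp (- c * T) - 1) * h t"
    by (simp add: algebra_simps flip: exp_add)
  moreover have "exp_window c T h = (\<lambda>t. exp (c * t) * (\<Phi> (t + T) - \<Phi> t))"
    using exp_window_antiderivative[OF \<Phi> T] by (simp add: fun_eq_iff)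
  ultimately show ?thesis
    by (simp only:)
qed

lemma exp_window_periodic:
  fixes h :: "real \<Rightarrow> real"
  assumes T: "T \<ge> 0" and hc: "continuous_on UNIV h" and hp: "periodic_real T h"
  shows "periodic_real T (exp_window c T h)"
proof -
  have "continuous_on UNIV (\<lambda>s. exp (- c * s) * h s)"
    using hc by (intro continuous_intros)
  then obtain \<Phi> where \<Phi>: "\<And>s. (\<Phi> has_real_derivative exp (- c * s) * h s) (at s)"
    using continuous_on_has_real_antiderivative by blast
  have "((\<lambda>t. \<Phi> (t + T) - exp (- c * T) * \<Phi> t) has_real_derivative
      exp (- c * (t + T)) * h (t + T) - exp (- c * T) * (exp (- c * t) * h t)) (at t)" for t
    using DERIV_diff[OF DERIV_chain2[OF \<Phi> DERIV_add[OF DERIV_ident DERIV_const[of T]]]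
        DERIV_cmult[OF \<Phi>, where c = "exp (- c * T)"]] by simp
  moreover have "exp (- c * (t + T)) * h (t + T) - exp (- c * T) * (exp (- c * t) * h t) = 0" for t
    unfolding hp[unfolded periodic_real_def, rule_format] by (simp add: algebra_simps flip: exp_add)
  ultimately have "\<Phi> (t + T + T) - exp (- c * T) * \<Phi> (t + T) = \<Phi> (t + T) - exp (- c * T) * \<Phi> t"
    for t
    using DERIV_isconst_all[of "\<lambda>t. \<Phi> (t + T) - exp (- c * T) * \<Phi> t" "t + T" t] by simp
  then have "\<Phi> (t + T + T) - \<Phi> (t + T) = exp (- c * T) * (\<Phi> (t + T) - \<Phi> t)" for t
    by (simp add: algebra_simps)
  moreover have "exp (c * (t + T)) * exp (- c * T) = exp (c * t)" for t
    by (simp add: algebra_simps flip: exp_add)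
  ultimately show ?thesis
    by (simp add: periodic_real_def exp_window_antiderivative[OF \<Phi> T] mult.assoc[symmetric])
qed

lemma exp_window_mono:
  fixes h1 h2 :: "real \<Rightarrow> real"
  assumes "continuous_on UNIV h1" "continuous_on UNIV h2" "\<And>s. h1 s \<le> h2 s"
  shows "exp_window c T h1 t \<le> exp_window c T h2 t"
  unfolding exp_window_def
  using assms
  by (intro mult_left_mono integral_le exp_mult_integrable_on) auto

lemma abs_exp_window_le:
  fixes h :: "real \<Rightarrow> real"
  assumes "continuous_on UNIV h" "\<And>s. \<bar>h s\<bar> \<le> H"
  shows "\<bar>exp_window c T h t\<bar> \<le> exp_window c T (\<lambda>_. H) t"
proof -
  have "norm (integral {t..t + T} (\<lambda>s. exp (- c * s) * h s))
      \<le> integral {t..t + T} (\<lambda>s. exp (- c * s) * H)"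
    using assms
    by (intro integral_norm_bound_integral exp_mult_integrable_on)
       (auto simp: abs_mult intro: mult_left_mono)
  then show ?thesis
    by (simp add: exp_window_def abs_mult)
qed

lemma periodic_exp_growth_eq_0:
  fixes w :: "real \<Rightarrow> real"
  assumes "T \<noteq> 0" "c \<noteq> 0" "\<And>t. (w has_real_derivative c * w t) (at t)" "periodic_real T w"
  shows "w t = 0"
proof -
  have "((\<lambda>t. w t * exp (- c * t)) has_real_derivative 0) (at x)" for x
    using DERIV_mult[OF assms(3) DERIV_exp_cmult[of "- c" x]] by (simp add: algebra_simps)
  then have const: "w t * exp (- c * t) = w s * exp (- c * s)" for s t
    using DERIV_isconst_all by blast
  have "w T = w 0"
    using assms(4) unfolding periodic_real_def by (metis add_0)
  then have "w 0 * exp (- c * T) = w 0"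
    using const[of T 0] by simp
  moreover have "exp (- c * T) \<noteq> 1"
    using assms(1,2) by simp
  ultimately have "w 0 = 0"
    by (metis mult_cancel_left1)
  then show ?thesis
    using const[of t 0] by simp
qed

lemma periodic_hyperbolic_eq_0:
  fixes d d' :: "real \<Rightarrow> real"
  assumes T: "T \<noteq> 0" and k: "k \<noteq> 0" and d: "\<And>t. (d has_real_derivative d' t) (at t)"
    and d': "\<And>t. (d' has_real_derivative k^2 * d t) (at t)" and dp: "periodic_real T d"
  shows "d t = 0"
proof -
  have "((\<lambda>t. d' t - k * d t) has_real_derivative (- k) * (d' t - k * d t)) (at t)" for t
    using DERIV_diff[OF d' DERIV_cmult[OF d, where c = k]] by (simp add: algebra_simps power2_eq_square)
  moreover have "periodic_real T (\<lambda>t. d' t - k * d t)"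
    using dp periodic_real_derivative[OF d dp] by (simp add: periodic_real_def)
  moreover have "- k \<noteq> 0"
    using k by simp
  ultimately have "d' t - k * d t = 0" for t
    using periodic_exp_growth_eq_0[OF T] by blast
  then have "d' t = k * d t" for t
    by simp
  then have "(d has_real_derivative k * d t) (at t)" for t
    using d[of t] by simp
  then show ?thesis
    using periodic_exp_growth_eq_0[OF T k _ dp] by blast
qed

text \<open>Variation of constants for v'' - k^2 v = - h, with the constants chosen so that the solution
  is T-periodic; here exp_window c T h t is the integral of e^(c (t - s)) h s over [t, t + T].\<close>
definition periodic_green :: "real \<Rightarrow> real \<Rightarrow> (real \<Rightarrow> real) \<Rightarrow> real \<Rightarrow> real" where
  "periodic_green k T h t =
     (exp_window k T h t / (1 - exp (- k * T)) + exp_window (- k) T h t / (exp (k * T) - 1)) / (2 * k)"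

definition periodic_green_deriv :: "real \<Rightarrow> real \<Rightarrow> (real \<Rightarrow> real) \<Rightarrow> real \<Rightarrow> real" where
  "periodic_green_deriv k T h t =
     (exp_window k T h t / (1 - exp (- k * T)) - exp_window (- k) T h t / (exp (k * T) - 1)) / 2"

context
  fixes k T :: real and h :: "real \<Rightarrow> real"
  assumes k: "k > 0" and T: "T > 0" and hc: "continuous_on UNIV h" and hp: "periodic_real T h"
begin

lemma exp_window_pm_has_derivative:
  "(exp_window k T h has_real_derivative k * exp_window k T h t - (1 - exp (- k * T)) * h t) (at t)"
  "(exp_window (- k) T h has_real_derivative - k * exp_window (- k) T h t + (exp (k * T) - 1) * h t) (at t)"
  using exp_window_has_derivative[OF less_imp_le[OF T] hc hp, of k t]
    exp_window_has_derivative[OF less_imp_le[OF T] hc hp, of "- k" t]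
  by (simp_all add: algebra_simps)

lemma periodic_green_has_derivative:
  "(periodic_green k T h has_real_derivative periodic_green_deriv k T h t) (at t)"
proof -
  define a b where "a = 1 - exp (- k * T)" and "b = exp (k * T) - 1"
  have ab: "a \<noteq> 0" "b \<noteq> 0"
    using k T by (auto simp: a_def b_def)
  have "(periodic_green k T h has_real_derivative
      ((k * exp_window k T h t - a * h t) / a + (- k * exp_window (- k) T h t + b * h t) / b) / (2 * k))
      (at t)"
    using exp_window_pm_has_derivative unfolding periodic_green_def[abs_def] a_def b_def
    by (intro DERIV_cdivide DERIV_add)
  moreover have "((k * exp_window k T h t - a * h t) / a + (- k * exp_window (- k) T h t + b * h t) / b)
      / (2 * k) = periodic_green_deriv k T h t"
    unfolding periodic_green_deriv_def a_def[symmetric] b_def[symmetric]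
    using ab k by (simp add: field_simps)
  ultimately show ?thesis
    by simp
qed

lemma periodic_green_deriv_has_derivative:
  "(periodic_green_deriv k T h has_real_derivative k^2 * periodic_green k T h t - h t) (at t)"
proof -
  define a b where "a = 1 - exp (- k * T)" and "b = exp (k * T) - 1"
  have ab: "a \<noteq> 0" "b \<noteq> 0"
    using k T by (auto simp: a_def b_def)
  have "(periodic_green_deriv k T h has_real_derivative
      ((k * exp_window k T h t - a * h t) / a - (- k * exp_window (- k) T h t + b * h t) / b) / 2)
      (at t)"
    using exp_window_pm_has_derivative unfolding periodic_green_deriv_def[abs_def] a_def b_def
    by (intro DERIV_cdivide DERIV_diff)
  moreover have "((k * exp_window k T h t - a * h t) / a - (- k * exp_window (- k) T h t + b * h t) / b) / 2
      = k^2 * periodic_green k T h t - h t"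
    unfolding periodic_green_def a_def[symmetric] b_def[symmetric]
    using ab k by (simp add: field_simps power2_eq_square)
  ultimately show ?thesis
    by (simp only:)
qed

lemma periodic_green_periodic: "periodic_real T (periodic_green k T h)"
  using exp_window_periodic[OF less_imp_le[OF T] hc hp]
  by (simp add: periodic_real_def periodic_green_def)

lemma periodic_green_unique:
  assumes "\<And>t. (v has_real_derivative v' t) (at t)" "\<And>t. (v' has_real_derivative v'' t) (at t)"
    and "periodic_real T v" and "\<And>t. v'' t = k^2 * v t - h t"
  shows "v t = periodic_green k T h t"
proof -
  have "((\<lambda>t. v t - periodic_green k T h t) has_real_derivative
      v' t - periodic_green_deriv k T h t) (at t)" for t
    by (intro DERIV_diff assms(1) periodic_green_has_derivative)
  moreover have "((\<lambda>t. v' t - periodic_green_deriv k T h t) has_real_derivative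
      k^2 * (v t - periodic_green k T h t)) (at t)" for t
    using DERIV_diff[OF assms(2) periodic_green_deriv_has_derivative] assms(4)
    by (simp add: algebra_simps)
  moreover have "periodic_real T (\<lambda>t. v t - periodic_green k T h t)"
    using assms(3) periodic_green_periodic by (simp add: periodic_real_def)
  moreover have "T \<noteq> 0" "k \<noteq> 0"
    using k T by auto
  ultimately have "v t - periodic_green k T h t = 0"
    by (intro periodic_hyperbolic_eq_0[where d' = "\<lambda>t. v' t - periodic_green_deriv k T h t"])
  then show ?thesis
    by simp
qed

end

lemma periodic_green_second_derivative:
  assumes k: "k > 0" and T: "T > 0" and d: "\<And>t. (x has_real_derivative x' t) (at t)"
    and d': "\<And>t. (x' has_real_derivative x'' t) (at t)" and "continuous_on UNIV x''"
    and p: "periodic_real T x"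
  shows "x t = periodic_green k T (\<lambda>t. k^2 * x t - x'' t) t"
  using assms(5) p periodic_real_derivative[OF d' periodic_real_derivative[OF d p]]
    has_real_derivative_imp_continuous_on[OF d]
  by (intro periodic_green_unique[OF k T _ _ d d']) (auto intro!: continuous_intros simp: periodic_real_def)

lemma periodic_green_mono:
  assumes k: "k > 0" and T: "T > 0"
    and "continuous_on UNIV h1" "continuous_on UNIV h2" "\<And>s. h1 s \<le> h2 s"
  shows "periodic_green k T h1 t \<le> periodic_green k T h2 t"
proof -
  have "1 - exp (- k * T) > 0" "exp (k * T) - 1 > 0"
    using k T by auto
  with k show ?thesis
    unfolding periodic_green_def
    by (intro divide_right_mono add_mono exp_window_mono assms(3-5)) auto
qed

lemma periodic_green_const:
  assumes "k > 0" "T > 0"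
  shows "periodic_green k T (\<lambda>_. H) t = H / k^2"
  using periodic_green_unique[OF assms, of "\<lambda>_. H" "\<lambda>_. H / k^2" "\<lambda>_. 0" "\<lambda>_. 0"] assms
  by (simp add: periodic_real_def)

lemma abs_periodic_green_deriv_le:
  assumes k: "k > 0" and T: "T > 0" and hc: "continuous_on UNIV h" and hb: "\<And>s. \<bar>h s\<bar> \<le> H"
  shows "\<bar>periodic_green_deriv k T h t\<bar> \<le> H / k"
proof -
  define a b where "a = 1 - exp (- k * T)" and "b = exp (k * T) - 1"
  have ab: "a > 0" "b > 0"
    using k T by (auto simp: a_def b_def)
  have "\<bar>periodic_green_deriv k T h t\<bar> \<le> (\<bar>exp_window k T h t\<bar> / a + \<bar>exp_window (- k) T h t\<bar> / b) / 2"
    using ab by (simp add: periodic_green_deriv_def a_def b_def abs_triangle_ineq4 divide_right_mono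
        order_trans[OF abs_triangle_ineq4])
  also have "\<dots> \<le> (exp_window k T (\<lambda>_. H) t / a + exp_window (- k) T (\<lambda>_. H) t / b) / 2"
    using ab by (intro divide_right_mono add_mono abs_exp_window_le hc hb) auto
  also have "\<dots> = k * periodic_green k T (\<lambda>_. H) t"
    using k by (simp add: periodic_green_def a_def b_def)
  also have "\<dots> = H / k"
    using periodic_green_const[OF k T] k by (simp add: power2_eq_square)
  finally show ?thesis .
qed

lemma periodic_green_lipschitz:
  assumes k: "k > 0" and T: "T > 0" and hc: "continuous_on UNIV h" and hp: "periodic_real T h"
    and hb: "\<And>s. \<bar>h s\<bar> \<le> H"
  shows "\<bar>periodic_green k T h t - periodic_green k T h s\<bar> \<le> H / k * \<bar>t - s\<bar>"
  using field_differentiable_bound[of UNIV "periodic_green k T h" "periodic_green_deriv k T h" "H / k"]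
    periodic_green_has_derivative[OF k T hc hp] abs_periodic_green_deriv_le[OF k T hc hb]
  by (simp add: has_real_derivative_iff_has_vector_derivative[symmetric])

lemma exp_window_dominated_convergence:
  fixes hs :: "nat \<Rightarrow> real \<Rightarrow> real"
  assumes "\<And>n. continuous_on UNIV (hs n)" "continuous_on UNIV h"
    and "\<And>n s. \<bar>hs n s\<bar> \<le> H" "\<And>s. (\<lambda>n. hs n s) \<longlonglongrightarrow> h s"
  shows "(\<lambda>n. exp_window c T (hs n) t) \<longlonglongrightarrow> exp_window c T h t"
proof -
  have "(\<lambda>n. integral {t..t + T} (\<lambda>s. exp (- c * s) * hs n s))
      \<longlonglongrightarrow> integral {t..t + T} (\<lambda>s. exp (- c * s) * h s)"
  proof (rule dominated_convergence(2)[where h = "\<lambda>s. exp (- c * s) * H"])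
    show "(\<lambda>s. exp (- c * s) * hs n s) integrable_on {t..t + T}" for n
      by (rule exp_mult_integrable_on[OF assms(1)])
    show "(\<lambda>s. exp (- c * s) * H) integrable_on {t..t + T}"
      by (rule exp_mult_integrable_on) simp
    show "norm (exp (- c * s) * hs n s) \<le> exp (- c * s) * H" for n s
      using assms(3)[of n s] by (simp add: abs_mult)
    show "(\<lambda>n. exp (- c * s) * hs n s) \<longlonglongrightarrow> exp (- c * s) * h s" for s
      by (intro tendsto_intros assms(4))
  qed
  then show ?thesis
    unfolding exp_window_def by (intro tendsto_intros)
qed

lemma periodic_green_dominated_convergence:
  fixes hs :: "nat \<Rightarrow> real \<Rightarrow> real"
  assumes "\<And>n. continuous_on UNIV (hs n)" "continuous_on UNIV h"
    and "\<And>n s. \<bar>hs n s\<bar> \<le> H" "\<And>s. (\<lambda>n. hs n s) \<longlonglongrightarrow> h s"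
  shows "(\<lambda>n. periodic_green k T (hs n) t) \<longlonglongrightarrow> periodic_green k T h t"
  unfolding periodic_green_def divide_inverse
  by (intro tendsto_intros exp_window_dominated_convergence[OF assms])

definition periodic_lower_solution :: "real \<Rightarrow> (real \<Rightarrow> real \<Rightarrow> real) \<Rightarrow> (real \<Rightarrow> real) \<Rightarrow> bool" where
  "periodic_lower_solution T F \<alpha> \<longleftrightarrow> periodic_real T \<alpha> \<and>
     (\<exists>\<alpha>' \<alpha>''. (\<forall>t. (\<alpha> has_real_derivative \<alpha>' t) (at t)) \<and> (\<forall>t. (\<alpha>' has_real_derivative \<alpha>'' t) (at t))
        \<and> continuous_on UNIV \<alpha>'' \<and> (\<forall>t. F t (\<alpha> t) \<le> \<alpha>'' t))"

definition periodic_upper_solution :: "real \<Rightarrow> (real \<Rightarrow> real \<Rightarrow> real) \<Rightarrow> (real \<Rightarrow> real) \<Rightarrow> bool" where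
  "periodic_upper_solution T F \<beta> \<longleftrightarrow> periodic_real T \<beta> \<and>
     (\<exists>\<beta>' \<beta>''. (\<forall>t. (\<beta> has_real_derivative \<beta>' t) (at t)) \<and> (\<forall>t. (\<beta>' has_real_derivative \<beta>'' t) (at t))
        \<and> continuous_on UNIV \<beta>'' \<and> (\<forall>t. \<beta>'' t \<le> F t (\<beta> t)))"

lemma periodic_lower_solutionI:
  assumes "periodic_real T \<alpha>" "\<And>t. (\<alpha> has_real_derivative \<alpha>' t) (at t)"
    "\<And>t. (\<alpha>' has_real_derivative \<alpha>'' t) (at t)" "continuous_on UNIV \<alpha>''" "\<And>t. F t (\<alpha> t) \<le> \<alpha>'' t"
  shows "periodic_lower_solution T F \<alpha>"
  using assms unfolding periodic_lower_solution_def by blast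

lemma periodic_upper_solutionI:
  assumes "periodic_real T \<beta>" "\<And>t. (\<beta> has_real_derivative \<beta>' t) (at t)"
    "\<And>t. (\<beta>' has_real_derivative \<beta>'' t) (at t)" "continuous_on UNIV \<beta>''" "\<And>t. \<beta>'' t \<le> F t (\<beta> t)"
  shows "periodic_upper_solution T F \<beta>"
  using assms unfolding periodic_upper_solution_def by blast

locale periodic_lower_upper =
  fixes T M :: real and F :: "real \<Rightarrow> real \<Rightarrow> real" and \<alpha> \<beta> :: "real \<Rightarrow> real"
  assumes T_pos: "T > 0"
    and M_pos: "M > 0"
    and F_continuous: "continuous_on UNIV (\<lambda>(t, y). F t y)"
    and F_periodic: "\<And>t y. F (t + T) y = F t y"
    and F_one_sided_lipschitz: "\<And>t y z. z \<le> y \<Longrightarrow> F t y - F t z \<le> M * (y - z)"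
    and lower: "periodic_lower_solution T F \<alpha>"
    and upper: "periodic_upper_solution T F \<beta>"
    and lower_le_upper: "\<And>t. \<alpha> t \<le> \<beta> t"
begin

text \<open>Writing the equation as x'' - M x = - (M x - F t x), its periodic solutions are the fixed
  points of step; the one-sided Lipschitz bound makes step monotone.\<close>
definition rhs :: "(real \<Rightarrow> real) \<Rightarrow> real \<Rightarrow> real" where
  "rhs x t = M * x t - F t (x t)"

definition step :: "(real \<Rightarrow> real) \<Rightarrow> real \<Rightarrow> real" where
  "step x = periodic_green (sqrt M) T (rhs x)"

lemma sqrt_M: "sqrt M > 0" "(sqrt M)^2 = M"
  using M_pos by auto

lemma rhs_mono: "x t \<le> y t \<Longrightarrow> rhs x t \<le> rhs y t"
  using F_one_sided_lipschitz[of "x t" "y t" t] by (simp add: rhs_def algebra_simps)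

lemma rhs_continuous: "continuous_on UNIV x \<Longrightarrow> continuous_on UNIV (rhs x)"
  unfolding rhs_def
  using continuous_on_compose2[OF F_continuous continuous_on_Pair[OF continuous_on_id], of UNIV x]
  by (auto intro!: continuous_intros)

lemma rhs_periodic: "periodic_real T x \<Longrightarrow> periodic_real T (rhs x)"
  by (simp add: periodic_real_def rhs_def F_periodic)

lemma step_has_derivatives:
  assumes "continuous_on UNIV x" "periodic_real T x"
  shows "(step x has_real_derivative periodic_green_deriv (sqrt M) T (rhs x) t) (at t)"
    "(periodic_green_deriv (sqrt M) T (rhs x) has_real_derivative M * step x t - rhs x t) (at t)"
  using periodic_green_has_derivative[OF sqrt_M(1) T_pos rhs_continuous rhs_periodic]
    periodic_green_deriv_has_derivative[OF sqrt_M(1) T_pos rhs_continuous rhs_periodic] assms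
  by (simp_all add: step_def sqrt_M(2))

lemma step_continuous_periodic:
  assumes "continuous_on UNIV x" "periodic_real T x"
  shows "continuous_on UNIV (step x)" "periodic_real T (step x)"
  using has_real_derivative_imp_continuous_on[OF step_has_derivatives(1)[OF assms]]
    periodic_green_periodic[OF sqrt_M(1) T_pos rhs_continuous rhs_periodic] assms
  by (auto simp: step_def)

lemma step_mono:
  assumes "continuous_on UNIV x" "continuous_on UNIV y" "\<And>s. x s \<le> y s"
  shows "step x t \<le> step y t"
  unfolding step_def
  using assms by (intro periodic_green_mono sqrt_M T_pos rhs_continuous rhs_mono)

lemma fixed_point_solves:
  assumes "continuous_on UNIV x" "periodic_real T x" "step x = x"
  shows "\<exists>x'. (\<forall>t. (x has_real_derivative x' t) (at t)) \<and>
    (\<forall>t. (x' has_real_derivative F t (x t)) (at t))"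
  using step_has_derivatives[OF assms(1,2)] assms(3) by (auto simp: rhs_def)

lemma lower_le_step: "\<alpha> t \<le> step \<alpha> t"
proof -
  obtain \<alpha>' \<alpha>'' where d: "\<And>t. (\<alpha> has_real_derivative \<alpha>' t) (at t)"
    and d': "\<And>t. (\<alpha>' has_real_derivative \<alpha>'' t) (at t)"
    and c: "continuous_on UNIV \<alpha>''" and le: "\<And>t. F t (\<alpha> t) \<le> \<alpha>'' t" and p: "periodic_real T \<alpha>"
    using lower unfolding periodic_lower_solution_def by blast
  have "\<alpha> t = periodic_green (sqrt M) T (\<lambda>t. M * \<alpha> t - \<alpha>'' t) t"
    by (rule periodic_green_second_derivative[OF sqrt_M(1) T_pos d d' c p, unfolded sqrt_M(2)])
  also have "\<dots> \<le> step \<alpha> t"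
    unfolding step_def using le has_real_derivative_imp_continuous_on[OF d]
    by (intro periodic_green_mono sqrt_M T_pos rhs_continuous) (auto intro!: continuous_intros c simp: rhs_def)
  finally show ?thesis .
qed

lemma step_le_upper: "step \<beta> t \<le> \<beta> t"
proof -
  obtain \<beta>' \<beta>'' where d: "\<And>t. (\<beta> has_real_derivative \<beta>' t) (at t)"
    and d': "\<And>t. (\<beta>' has_real_derivative \<beta>'' t) (at t)"
    and c: "continuous_on UNIV \<beta>''" and le: "\<And>t. \<beta>'' t \<le> F t (\<beta> t)" and p: "periodic_real T \<beta>"
    using upper unfolding periodic_upper_solution_def by blast
  have "step \<beta> t \<le> periodic_green (sqrt M) T (\<lambda>t. M * \<beta> t - \<beta>'' t) t"
    unfolding step_def using le has_real_derivative_imp_continuous_on[OF d]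
    by (intro periodic_green_mono sqrt_M T_pos rhs_continuous) (auto intro!: continuous_intros c simp: rhs_def)
  also have "\<dots> = \<beta> t"
    by (rule periodic_green_second_derivative[OF sqrt_M(1) T_pos d d' c p, unfolded sqrt_M(2), symmetric])
  finally show ?thesis .
qed

lemma lower_continuous: "continuous_on UNIV \<alpha>"
  using lower has_real_derivative_imp_continuous_on
  unfolding periodic_lower_solution_def by blast

lemma upper_continuous: "continuous_on UNIV \<beta>"
  using upper has_real_derivative_imp_continuous_on
  unfolding periodic_upper_solution_def by blast

definition iter :: "nat \<Rightarrow> real \<Rightarrow> real" where
  "iter n = (step ^^ n) \<alpha>"

lemma iter_0: "iter 0 = \<alpha>" and iter_Suc: "iter (Suc n) = step (iter n)"
  by (simp_all add: iter_def)

lemma iter_continuous_periodic: "continuous_on UNIV (iter n)" "periodic_real T (iter n)"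
proof (induction n)
  case 0
  show "continuous_on UNIV (iter 0)" "periodic_real T (iter 0)"
    using lower_continuous lower by (simp_all add: iter_0 periodic_lower_solution_def)
next
  case (Suc n)
  show "continuous_on UNIV (iter (Suc n))" "periodic_real T (iter (Suc n))"
    using step_continuous_periodic[OF Suc] by (simp_all add: iter_Suc)
qed

lemma iter_le_Suc: "iter n t \<le> iter (Suc n) t"
proof (induction n arbitrary: t)
  case 0
  show ?case
    using lower_le_step by (simp add: iter_0 iter_Suc)
next
  case (Suc n)
  have "step (iter n) t \<le> step (iter (Suc n)) t"
    using Suc by (intro step_mono iter_continuous_periodic)
  then show ?case
    by (simp add: iter_Suc)
qed

lemma iter_le_upper: "iter n t \<le> \<beta> t"
proof (induction n arbitrary: t)
  case 0
  show ?case
    using lower_le_upper by (simp add: iter_0)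
next
  case (Suc n)
  have "step (iter n) t \<le> step \<beta> t"
    using Suc by (intro step_mono iter_continuous_periodic upper_continuous)
  then show ?case
    using step_le_upper[of t] by (simp add: iter_Suc)
qed

lemma lower_le_iter: "\<alpha> t \<le> iter n t"
  by (induction n) (auto simp: iter_0 intro: order_trans[OF _ iter_le_Suc])

lemma rhs_iter_bounded: "\<exists>H. \<forall>n s. \<bar>rhs (iter n) s\<bar> \<le> H"
proof -
  obtain H\<alpha> where H\<alpha>: "\<And>s. \<bar>rhs \<alpha> s\<bar> \<le> H\<alpha>"
    using periodic_real_bounded[OF T_pos rhs_continuous[OF lower_continuous] rhs_periodic] lower
    unfolding periodic_lower_solution_def by blast
  obtain H\<beta> where H\<beta>: "\<And>s. \<bar>rhs \<beta> s\<bar> \<le> H\<beta>"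
    using periodic_real_bounded[OF T_pos rhs_continuous[OF upper_continuous] rhs_periodic] upper
    unfolding periodic_upper_solution_def by blast
  have mono: "rhs \<alpha> s \<le> rhs (iter n) s" "rhs (iter n) s \<le> rhs \<beta> s" for n s
    using lower_le_iter iter_le_upper by (auto intro: rhs_mono)
  have "\<bar>rhs (iter n) s\<bar> \<le> H\<alpha> + H\<beta>" for n s
    using mono[where n = n and s = s] H\<alpha>[of s] H\<beta>[of s] unfolding abs_le_iff by linarith
  then show ?thesis
    by blast
qed

definition sol :: "real \<Rightarrow> real" where
  "sol t = (SUP n. iter n t)"

lemma iter_tendsto_sol: "(\<lambda>n. iter n t) \<longlonglongrightarrow> sol t"
  unfolding sol_def
  by (rule LIMSEQ_incseq_SUP) (auto intro!: bdd_aboveI incseq_SucI iter_le_Suc iter_le_upper)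

lemma sol_between: "\<alpha> t \<le> sol t" "sol t \<le> \<beta> t"
  using LIMSEQ_le_const[OF iter_tendsto_sol] LIMSEQ_le_const2[OF iter_tendsto_sol]
    lower_le_iter iter_le_upper by blast+

lemma sol_periodic: "periodic_real T sol"
  using iter_continuous_periodic(2) by (simp add: periodic_real_def sol_def)

text \<open>The iterates are equi-Lipschitz, so the monotone limit is continuous.\<close>
lemma sol_continuous: "continuous_on UNIV sol"
proof -
  obtain H where H: "\<And>n s. \<bar>rhs (iter n) s\<bar> \<le> H"
    using rhs_iter_bounded by blast
  have "\<bar>iter (Suc n) t - iter (Suc n) s\<bar> \<le> H / sqrt M * \<bar>t - s\<bar>" for n t s
    unfolding iter_Suc step_def
    using H by (intro periodic_green_lipschitz sqrt_M T_pos rhs_continuous rhs_periodic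
        iter_continuous_periodic)
  then have "\<bar>sol t - sol s\<bar> \<le> H / sqrt M * \<bar>t - s\<bar>" for t s
    by (intro LIMSEQ_le_const2[OF tendsto_rabs[OF tendsto_diff[OF
          LIMSEQ_Suc[OF iter_tendsto_sol] LIMSEQ_Suc[OF iter_tendsto_sol]]]]) auto
  moreover have "0 \<le> H / sqrt M"
    using order_trans[OF abs_ge_zero H[of 0 0]] sqrt_M(1) by simp
  ultimately have "(H / sqrt M)-lipschitz_on UNIV sol"
    by (intro lipschitz_onI) (auto simp: dist_real_def)
  then show ?thesis
    by (rule lipschitz_on_continuous_on)
qed

lemma step_sol: "step sol = sol"
proof
  fix t
  obtain H where H: "\<And>n s. \<bar>rhs (iter n) s\<bar> \<le> H"
    using rhs_iter_bounded by blast
  have "(\<lambda>n. F s (iter n s)) \<longlonglongrightarrow> F s (sol s)" for s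
    using continuous_on_tendsto_compose[OF F_continuous tendsto_Pair[OF tendsto_const iter_tendsto_sol]]
    by simp
  then have "(\<lambda>n. rhs (iter n) s) \<longlonglongrightarrow> rhs sol s" for s
    unfolding rhs_def by (intro tendsto_intros iter_tendsto_sol)
  then have "(\<lambda>n. step (iter n) t) \<longlonglongrightarrow> step sol t"
    unfolding step_def
    by (intro periodic_green_dominated_convergence[OF rhs_continuous rhs_continuous H]
        iter_continuous_periodic sol_continuous)
  moreover have "(\<lambda>n. step (iter n) t) \<longlonglongrightarrow> sol t"
    using LIMSEQ_Suc[OF iter_tendsto_sol] by (simp add: iter_Suc)
  ultimately show "step sol t = sol t"
    by (rule LIMSEQ_unique)
qed

lemma exists_periodic_solution:
  "\<exists>x x'. (\<forall>t. (x has_real_derivative x' t) (at t)) \<and>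
    (\<forall>t. (x' has_real_derivative F t (x t)) (at t)) \<and> periodic_real T x \<and> (\<forall>t. \<alpha> t \<le> x t \<and> x t \<le> \<beta> t)"
  using fixed_point_solves[OF sol_continuous sol_periodic step_sol] sol_periodic sol_between by blast

end

lemma abs_sin_diff_le: "\<bar>sin y - sin z\<bar> \<le> \<bar>y - z\<bar>" for y z :: real
  using field_differentiable_bound[of UNIV sin cos 1 y z]
  by (auto intro: DERIV_sin abs_cos_le_one)

lemma abs_cos_diff_le: "\<bar>cos y - cos z\<bar> \<le> \<bar>y - z\<bar>" for y z :: real
  using field_differentiable_bound[of UNIV cos "\<lambda>x. - sin x" 1 y z]
  by (auto intro: DERIV_cos abs_sin_le_one)

lemma abs_sin_cos_combination_diff_le:
  fixes a b y z :: real
  shows "\<bar>(a * sin y - b * cos y) - (a * sin z - b * cos z)\<bar> \<le> (\<bar>a\<bar> + \<bar>b\<bar>) * \<bar>y - z\<bar>"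
proof -
  have "\<bar>(a * sin y - b * cos y) - (a * sin z - b * cos z)\<bar>
      \<le> \<bar>a\<bar> * \<bar>sin y - sin z\<bar> + \<bar>b\<bar> * \<bar>cos y - cos z\<bar>"
    by (simp add: abs_mult[symmetric] algebra_simps abs_triangle_ineq4)
  also have "\<dots> \<le> \<bar>a\<bar> * \<bar>y - z\<bar> + \<bar>b\<bar> * \<bar>y - z\<bar>"
    by (intro add_mono mult_left_mono abs_sin_diff_le abs_cos_diff_le) auto
  finally show ?thesis
    by (simp add: algebra_simps)
qed

text \<open>Near the bottom (resp. top) of the interval (0, pi), gravity dominates the bounded
  horizontal forcing; this is what makes small shifts of a fast oscillation into lower and upper
  solutions.\<close>
lemma pendulum_barrier:
  fixes a p r Cp Cr :: real
  assumes a: "0 < a" "a \<le> 1 / (2 * (1 + Cr + Cp))" and p: "\<bar>p\<bar> \<le> Cp" and r: "\<bar>r\<bar> \<le> Cr"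
  shows "p * sin a - (1 + r) * cos a \<le> - r"
    and "r \<le> p * sin (pi - a) - (1 + r) * cos (pi - a)"
proof -
  have "0 \<le> Cp" "0 \<le> Cr"
    using p r by linarith+
  then have small: "a * (1 + Cr + Cp) \<le> 1 / 2"
    using a by (simp add: field_simps)
  have "\<bar>p * sin a\<bar> \<le> Cp * a"
    unfolding abs_mult using abs_sin_x_le_abs_x[of a] a(1) \<open>0 \<le> Cp\<close>
    by (intro mult_mono p) auto
  moreover have "\<bar>r * (1 - cos a)\<bar> \<le> Cr * a"
    unfolding abs_mult using abs_cos_diff_le[of a 0] a(1) \<open>0 \<le> Cr\<close>
    by (intro mult_mono r) auto
  moreover have "1 - cos a \<le> a"
    using abs_cos_diff_le[of a 0] a(1) by simp
  moreover have "(1 + r) * cos a - r = 1 - (1 - cos a) - r * (1 - cos a)"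
    by (simp add: algebra_simps)
  ultimately have "\<bar>p * sin a\<bar> \<le> (1 + r) * cos a - r"
    using small by (simp add: algebra_simps abs_le_iff) linarith
  then show "p * sin a - (1 + r) * cos a \<le> - r" "r \<le> p * sin (pi - a) - (1 + r) * cos (pi - a)"
    by (simp_all add: abs_le_iff)
qed

lemma pendulum_periodic_solution:
  fixes f q \<alpha> \<alpha>' :: "real \<Rightarrow> real"
  assumes T: "T > 0"
    and fc: "continuous_on UNIV f" and fp: "periodic_real T f" and fb: "\<And>t. \<bar>f t\<bar> \<le> Cf"
    and qc: "continuous_on UNIV q" and qp: "periodic_real T q" and qb: "\<And>t. \<bar>q t\<bar> \<le> Cq"
    and d\<alpha>: "\<And>t. (\<alpha> has_real_derivative \<alpha>' t) (at t)"
    and d\<alpha>': "\<And>t. (\<alpha>' has_real_derivative - q t) (at t)"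
    and \<alpha>p: "periodic_real T \<alpha>"
    and \<alpha>_pos: "\<And>t. 0 < \<alpha> t" and \<alpha>_small: "\<And>t. \<alpha> t \<le> 1 / (2 * (1 + Cq + Cf))"
  shows "\<exists>x x'. (\<forall>t. (x has_real_derivative x' t) (at t)) \<and>
    (\<forall>t. (x' has_real_derivative f t * sin (x t) - (1 + q t) * cos (x t)) (at t)) \<and>
    periodic_real T x \<and> (\<forall>t. 0 < x t \<and> x t < pi)"
proof -
  have C: "0 \<le> Cf" "0 \<le> Cq"
    using fb[of 0] qb[of 0] by linarith+
  interpret periodic_lower_upper T "Cf + 1 + Cq" "\<lambda>t y. f t * sin y - (1 + q t) * cos y"
    \<alpha> "\<lambda>t. pi - \<alpha> t"
  proof
    show "continuous_on UNIV (\<lambda>(t, y). f t * sin y - (1 + q t) * cos y)"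
      unfolding case_prod_beta'
      by (intro continuous_intros continuous_on_compose2[OF fc] continuous_on_compose2[OF qc]) auto
    show "f t * sin y - (1 + q t) * cos y - (f t * sin z - (1 + q t) * cos z) \<le> (Cf + 1 + Cq) * (y - z)"
      if "z \<le> y" for t y z
    proof -
      have "\<bar>f t\<bar> + \<bar>1 + q t\<bar> \<le> Cf + 1 + Cq"
        using fb[of t] qb[of t] by linarith
      then have "(\<bar>f t\<bar> + \<bar>1 + q t\<bar>) * \<bar>y - z\<bar> \<le> (Cf + 1 + Cq) * (y - z)"
        using that by (simp add: mult_right_mono)
      with abs_sin_cos_combination_diff_le[of "f t" y "1 + q t" z] show ?thesis
        by linarith
    qed
    have lo: "f t * sin (\<alpha> t) - (1 + q t) * cos (\<alpha> t) \<le> - q t"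
      and up: "q t \<le> f t * sin (pi - \<alpha> t) - (1 + q t) * cos (pi - \<alpha> t)" for t
      using pendulum_barrier[OF \<alpha>_pos \<alpha>_small fb qb] by blast+
    show "periodic_lower_solution T (\<lambda>t y. f t * sin y - (1 + q t) * cos y) \<alpha>"
      by (rule periodic_lower_solutionI[OF \<alpha>p d\<alpha> d\<alpha>']) (use qc lo in \<open>auto intro: continuous_intros\<close>)
    have "((\<lambda>t. pi - \<alpha> t) has_real_derivative - \<alpha>' t) (at t)" for t
      using DERIV_diff[OF DERIV_const d\<alpha>] by simp
    moreover have "((\<lambda>t. - \<alpha>' t) has_real_derivative q t) (at t)" for t
      using DERIV_minus[OF d\<alpha>'] by simp
    moreover have "periodic_real T (\<lambda>t. pi - \<alpha> t)"
      using \<alpha>p by (simp add: periodic_real_def)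
    ultimately show "periodic_upper_solution T (\<lambda>t y. f t * sin y - (1 + q t) * cos y) (\<lambda>t. pi - \<alpha> t)"
      using qc up by (intro periodic_upper_solutionI)
    have "1 / (2 * (1 + Cq + Cf)) \<le> 1 / 2"
      using C by (simp add: field_simps)
    then show "\<alpha> t \<le> pi - \<alpha> t" for t
      using \<alpha>_small[of t] pi_gt3 by linarith
  qed (use T fp qp C in \<open>auto simp: periodic_real_def\<close>)
  obtain x x' where sol: "\<forall>t. (x has_real_derivative x' t) (at t)"
    "\<forall>t. (x' has_real_derivative f t * sin (x t) - (1 + q t) * cos (x t)) (at t)"
    "periodic_real T x" and between: "\<And>t. \<alpha> t \<le> x t \<and> x t \<le> pi - \<alpha> t"
    using exists_periodic_solution by blast
  have "0 < x t \<and> x t < pi" for t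
    using \<alpha>_pos[of t] between[of t] by linarith
  with sol show ?thesis
    by blast
qed

lemma rescaled_corrector:
  fixes G G' g :: "real \<Rightarrow> real" and n :: nat
  assumes dG: "\<And>t. (G has_real_derivative G' t) (at t)" and dG': "\<And>t. (G' has_real_derivative g t) (at t)"
    and Gp: "periodic_real T G" and Gb: "\<And>s. \<bar>G s\<bar> \<le> B" and n: "n > 0"
  shows "((\<lambda>t. c - G (real n * t) / (real n)^2) has_real_derivative - G' (real n * t) / real n) (at t)"
    and "((\<lambda>t. - G' (real n * t) / real n) has_real_derivative - g (real n * t)) (at t)"
    and "periodic_real T (\<lambda>t. c - G (real n * t) / (real n)^2)"
    and "\<bar>G (real n * t) / (real n)^2\<bar> \<le> B / real n"
proof -
  have "((\<lambda>t. G (real n * t)) has_real_derivative G' (real n * t) * real n) (at t)"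
    using DERIV_chain2[OF dG DERIV_cmult[OF DERIV_ident, where c = "real n"]] by simp
  from DERIV_diff[OF DERIV_const[of c] DERIV_cdivide[OF this, where c = "(real n)^2"]]
  show "((\<lambda>t. c - G (real n * t) / (real n)^2) has_real_derivative - G' (real n * t) / real n) (at t)"
    using n by (simp add: power2_eq_square)
  have "((\<lambda>t. G' (real n * t)) has_real_derivative g (real n * t) * real n) (at t)"
    using DERIV_chain2[OF dG' DERIV_cmult[OF DERIV_ident, where c = "real n"]] by simp
  from DERIV_cdivide[OF DERIV_minus[OF this], where c = "real n"]
  show "((\<lambda>t. - G' (real n * t) / real n) has_real_derivative - g (real n * t)) (at t)"
    using n by simp
  show "periodic_real T (\<lambda>t. c - G (real n * t) / (real n)^2)"
    using periodic_real_scale_nat[OF Gp] by (simp add: periodic_real_def)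
  have "0 \<le> B" "1 \<le> real n"
    using order_trans[OF abs_ge_zero Gb[of 0]] n by auto
  have "\<bar>G (real n * t) / (real n)^2\<bar> \<le> B / (real n)^2"
    using Gb by (simp add: divide_right_mono)
  also have "\<dots> \<le> B / real n"
    using \<open>0 \<le> B\<close> \<open>1 \<le> real n\<close> by (intro divide_left_mono) (auto simp: power2_eq_square)
  finally show "\<bar>G (real n * t) / (real n)^2\<bar> \<le> B / real n" .
qed

theorem theorem3p8:
  fixes f g :: "real \<Rightarrow> real" and T :: real
  assumes "T > 0"
    and "smooth_real f" and "smooth_real g"
    and "periodic_real T f" and "periodic_real T g"
    and "(1 / T) * integral {0..T} g = 0"
  shows "\<exists>lam0::real. \<forall>lam::nat. real lam \<ge> lam0 \<longrightarrow>
           (\<exists>x x' :: real \<Rightarrow> real.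
              (\<forall>t. (x has_real_derivative x' t) (at t)) \<and>
              (\<forall>t. (x' has_real_derivative
                      (f t * sin (x t) - (1 + g (real lam * t)) * cos (x t))) (at t)) \<and>
              periodic_real T x \<and>
              (\<forall>t. 0 < x t \<and> x t < pi))"
proof -
  note T = assms(1) and fp = assms(4) and gp = assms(5)
  have fc: "continuous_on UNIV f" and gc: "continuous_on UNIV g"
    using assms(2,3) by (simp_all add: smooth_real_continuous_on)
  obtain G G' where dG: "\<And>t. (G has_real_derivative G' t) (at t)"
    and dG': "\<And>t. (G' has_real_derivative g t) (at t)" and Gp: "periodic_real T G"
    using periodic_second_antiderivative[OF T gc gp] assms(6) T by auto
  obtain B Cf Cg where B: "\<And>t. \<bar>G t\<bar> \<le> B" and Cf: "\<And>t. \<bar>f t\<bar> \<le> Cf" and Cg: "\<And>t. \<bar>g t\<bar> \<le> Cg"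
    using periodic_real_bounded[OF T] has_real_derivative_imp_continuous_on[OF dG] Gp fc fp gc gp
    by metis
  define \<delta> where "\<delta> = 1 / (2 * (1 + Cg + Cf))"
  have "\<delta> > 0"
    using Cf[of 0] Cg[of 0] by (simp add: \<delta>_def)
  show ?thesis
  proof (intro exI[of _ "max 1 (4 * B / \<delta>)"] allI impI)
    fix n :: nat
    assume n: "max 1 (4 * B / \<delta>) \<le> real n"
    then have "n > 0" "B / real n \<le> \<delta> / 4"
      using \<open>\<delta> > 0\<close> by (auto simp: field_simps)
    then have "0 < \<delta> / 2 - G (real n * t) / (real n)^2 \<and> \<delta> / 2 - G (real n * t) / (real n)^2 \<le> \<delta>" for t
      using rescaled_corrector(4)[OF dG dG' Gp B, of n t, unfolded abs_le_iff] \<open>\<delta> > 0\<close> by linarith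
    moreover have "continuous_on UNIV (\<lambda>t. g (real n * t))"
      by (intro continuous_on_compose2[OF gc] continuous_intros) auto
    ultimately show "\<exists>x x'. (\<forall>t. (x has_real_derivative x' t) (at t)) \<and>
        (\<forall>t. (x' has_real_derivative f t * sin (x t) - (1 + g (real n * t)) * cos (x t)) (at t)) \<and>
        periodic_real T x \<and> (\<forall>t. 0 < x t \<and> x t < pi)"
      using pendulum_periodic_solution[OF T fc fp Cf _ periodic_real_scale_nat[OF gp] Cg
          rescaled_corrector(1)[OF dG dG' Gp B \<open>n > 0\<close>, where c = "\<delta> / 2"]
          rescaled_corrector(2)[OF dG dG' Gp B \<open>n > 0\<close>]
          rescaled_corrector(3)[OF dG dG' Gp B \<open>n > 0\<close>, where c = "\<delta> / 2"]]
      unfolding \<delta>_def by blast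
  qed
qed

end
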